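(* Let $\langle \Gamma,\Psi\rangle$ be a PSAT instance in propositional normal form, with $\Psi=\{P(y_i)=p_i \mid 1\le i\le k\}$. Run the following column generation procedure on it. Form the vector $p=(1,p_1,\dots,p_k)'$ with $p_1,\dots,p_k$ sorted in decreasing order. Initialize $A$ as the $(k+1)\times(k+1)$ upper triangular matrix whose entries on and above the diagonal are $1$ and whose other entries are $0$. Initialize $\pi$ by $\pi_i=p_i-p_{i+1}$ for $1\le i\le k$ and $\pi_{k+1}=p_{k+1}$, where the $p_i$ here denote the successive entries of the vector $p$. Initialize the cost vector $c\in\{0,1\}^{k+1}$ by $c_j=1$ iff column $j$ of $A$ is $\Gamma$-inconsistent. While $c'\pi>0$, repeat the following steps. 1. Solve, by the simplex method, the linear program: minimize $c'\pi$ subject to $A\pi=p$ and $\pi\ge 0$. This yields a primal solution $\pi$ and a dual solution $z=c_B B^{-1}$, where $B$ is the current basis and $c_B$ is the cost vector of the basis columns. 2. Using a SAT solver, search for a $\Gamma$-consistent $\{0,1\}$-column $y$ satisfying $z'y\ge 0$. This is done by encoding the linear inequality as a propositional formula and conjoining it with $\Gamma$. 3. If no such $y$ exists, return "No". Otherwise append $y$ as a new column of $A$, append $0$ to $c$, and let the simplex method replace an appropriate outgoing basis column. When the loop ends, return $(\pi,A)$, which satisfies $A\pi=p$ and $c'\pi=0$. Then this procedure is a decision procedure for PSAT. That is, it returns a pair $(\pi,A)$ with $A\pi=p$, $\pi\ge 0$ and total cost $c'\pi=0$ if the instance is satisfiable, and it returns "No" if the instance is unsatisfiable.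
   Context: Classical propositional logic over finitely many propositional symbols. A probability distribution over propositional valuations is a map $\pi$ from the (finitely many) valuations $v$ into $[0,1]$ whose values sum to $1$. The probability of a formula $\alpha$ under $\pi$ is $P_\pi(\alpha)=\sum\{\pi(v)\mid v(\alpha)=1\}$. A PSAT instance in propositional normal form is a pair $\langle\Gamma,\Psi\rangle$ with the following components. - $\Gamma$ is a finite set of propositional formulas, each required to have probability $1$. - $\Psi=\{P(y_i)=p_i\mid 1\le i\le k\}$, where $y_1,\dots,y_k$ are propositional symbols and $0<p_i<1$. The instance is satisfiable iff there is a probability distribution $\pi$ with $P_\pi(\gamma)=1$ for all $\gamma\in\Gamma$ and $P_\pi(y_i)=p_i$ for all $i$. Columns of $A$ are $\{0,1\}$-vectors of length $k+1$. The first entry corresponds to the constraint $\sum\pi_j=1$, and the remaining entries give values of $y_1,\dots,y_k$. A column (equivalently, a valuation over $y_1,\dots,y_k$) is $\Gamma$-consistent if it extends to a valuation over all symbols that satisfies every formula of $\Gamma$, and is $\Gamma$-inconsistent otherwise. *)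

theory Defs
  imports Complex_Main
begin

datatype 'a pform =
    PVar 'a
  | PBot
  | PNeg "'a pform"
  | PAnd "'a pform" "'a pform"
  | POr "'a pform" "'a pform"
  | PImp "'a pform" "'a pform"

fun peval :: "('a \<Rightarrow> bool) \<Rightarrow> 'a pform \<Rightarrow> bool" where
  "peval v (PVar x) = v x"
| "peval v PBot = False"
| "peval v (PNeg f) = (\<not> peval v f)"
| "peval v (PAnd f g) = (peval v f \<and> peval v g)"
| "peval v (POr f g) = (peval v f \<or> peval v g)"
| "peval v (PImp f g) = (peval v f \<longrightarrow> peval v g)"

definition prob_of :: "(('a::finite \<Rightarrow> bool) \<Rightarrow> real) \<Rightarrow> 'a pform \<Rightarrow> real" where
  "prob_of \<pi> \<alpha> = (\<Sum>v\<in>{v. peval v \<alpha>}. \<pi> v)"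

definition is_distribution :: "(('a::finite \<Rightarrow> bool) \<Rightarrow> real) \<Rightarrow> bool" where
  "is_distribution \<pi> \<longleftrightarrow> (\<forall>v. 0 \<le> \<pi> v \<and> \<pi> v \<le> 1) \<and> (\<Sum>v\<in>UNIV. \<pi> v) = 1"

definition psat_satisfiable ::
  "'a::finite pform set \<Rightarrow> (nat \<Rightarrow> 'a) \<Rightarrow> (nat \<Rightarrow> real) \<Rightarrow> nat \<Rightarrow> bool" where
  "psat_satisfiable G yv ps k \<longleftrightarrow>
     (\<exists>\<pi>. is_distribution \<pi> \<and> (\<forall>g\<in>G. prob_of \<pi> g = 1)
          \<and> (\<forall>i\<in>{1..k}. prob_of \<pi> (PVar (yv i)) = ps i))"

text \<open>Rows: row 0 is the constraint sum pi = 1, row r (1 \<le> r \<le> k) corresponds to the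
  r-th symbol in the sorted order, i.e. to \<open>yv (\<sigma> r)\<close>.\<close>

definition mat_vec :: "real list list \<Rightarrow> real list \<Rightarrow> nat \<Rightarrow> real" where
  "mat_vec A \<pi> r = (\<Sum>j<length A. (A ! j) ! r * \<pi> ! j)"

definition dotk :: "nat \<Rightarrow> real list \<Rightarrow> real list \<Rightarrow> real" where
  "dotk k u w = (\<Sum>r\<le>k. u ! r * w ! r)"

definition cost :: "real list \<Rightarrow> real list \<Rightarrow> real" where
  "cost c \<pi> = (\<Sum>j<length c. c ! j * \<pi> ! j)"

definition feasible :: "nat \<Rightarrow> real list \<Rightarrow> real list list \<Rightarrow> real list \<Rightarrow> bool" where
  "feasible k p A \<pi> \<longleftrightarrow> length \<pi> = length A \<and> (\<forall>j<length A. 0 \<le> \<pi> ! j)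
      \<and> (\<forall>r\<le>k. mat_vec A \<pi> r = p ! r)"

definition is_basis :: "nat \<Rightarrow> real list list \<Rightarrow> nat list \<Rightarrow> bool" where
  "is_basis k A B \<longleftrightarrow> length B = k + 1 \<and> distinct B \<and> set B \<subseteq> {..<length A}
     \<and> (\<forall>u::nat \<Rightarrow> real. (\<forall>r\<le>k. (\<Sum>i\<le>k. u i * (A ! (B ! i)) ! r) = 0)
                        \<longrightarrow> (\<forall>i\<le>k. u i = 0))"

definition is_bfs :: "nat \<Rightarrow> real list \<Rightarrow> real list list \<Rightarrow> nat list \<Rightarrow> real list \<Rightarrow> bool" where
  "is_bfs k p A B \<pi> \<longleftrightarrow> is_basis k A B \<and> feasible k p A \<pi>
     \<and> (\<forall>j<length A. j \<notin> set B \<longrightarrow> \<pi> ! j = 0)"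

text \<open>Output of the simplex method on  min c'pi  s.t.  A pi = p, pi \<ge> 0 :
  an optimal basis B with basic solution pi and dual z = c_B B^{-1}
  (i.e. z'B_i = c_{B_i} for every basis column), optimality meaning that all
  reduced costs c_j - z'A_j are nonnegative.\<close>
definition simplex_result ::
  "nat \<Rightarrow> real list \<Rightarrow> real list list \<Rightarrow> real list \<Rightarrow> nat list \<Rightarrow> real list \<Rightarrow> real list \<Rightarrow> bool" where
  "simplex_result k p A c B \<pi> z \<longleftrightarrow> is_bfs k p A B \<pi> \<and> length z = k + 1
     \<and> (\<forall>i\<le>k. dotk k z (A ! (B ! i)) = c ! (B ! i))
     \<and> (\<forall>j<length A. dotk k z (A ! j) \<le> c ! j)"

definition gamma_consistent ::
  "'a pform set \<Rightarrow> (nat \<Rightarrow> 'a) \<Rightarrow> (nat \<Rightarrow> nat) \<Rightarrow> nat \<Rightarrow> real list \<Rightarrow> bool" where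
  "gamma_consistent G yv \<sigma> k col \<longleftrightarrow>
     (\<exists>v. (\<forall>g\<in>G. peval v g) \<and> (\<forall>r\<in>{1..k}. v (yv (\<sigma> r)) = (col ! r = 1)))"

text \<open>A {0,1}-column of A (first entry 1, for the constraint sum pi = 1).\<close>
definition is_column :: "nat \<Rightarrow> real list \<Rightarrow> bool" where
  "is_column k col \<longleftrightarrow> length col = k + 1 \<and> col ! 0 = 1 \<and> (\<forall>r\<le>k. col ! r \<in> {0, 1})"

definition pvec :: "(nat \<Rightarrow> real) \<Rightarrow> (nat \<Rightarrow> nat) \<Rightarrow> nat \<Rightarrow> real list" where
  "pvec ps \<sigma> k = 1 # map (\<lambda>i. ps (\<sigma> i)) [1..<k+1]"

definition A_init :: "nat \<Rightarrow> real list list" where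
  "A_init k = map (\<lambda>j. map (\<lambda>r. if r \<le> j then 1 else 0) [0..<k+1]) [0..<k+1]"

definition pi_init :: "nat \<Rightarrow> real list \<Rightarrow> real list" where
  "pi_init k p = map (\<lambda>j. if j < k then p ! j - p ! (Suc j) else p ! k) [0..<k+1]"

definition c_init ::
  "'a pform set \<Rightarrow> (nat \<Rightarrow> 'a) \<Rightarrow> (nat \<Rightarrow> nat) \<Rightarrow> nat \<Rightarrow> real list" where
  "c_init G yv \<sigma> k = map (\<lambda>col. if gamma_consistent G yv \<sigma> k col then 0 else 1) (A_init k)"

text \<open>States: running with (A, c, pi); returned (A, c, pi) (the output is (pi, A));
  returned "No".\<close>
datatype cg_state = Running "real list list" "real list" "real list"
  | Returned "real list list" "real list" "real list"
  | Answer_No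

definition cg_init ::
  "'a pform set \<Rightarrow> (nat \<Rightarrow> 'a) \<Rightarrow> (nat \<Rightarrow> real) \<Rightarrow> (nat \<Rightarrow> nat) \<Rightarrow> nat \<Rightarrow> cg_state" where
  "cg_init G yv ps \<sigma> k =
     Running (A_init k) (c_init G yv \<sigma> k) (pi_init k (pvec ps \<sigma> k))"

text \<open>One iteration of the while loop (nondeterministic: any simplex outcome, any
  column returned by the SAT solver, any admissible pivot).\<close>
inductive cg_step ::
  "'a pform set \<Rightarrow> (nat \<Rightarrow> 'a) \<Rightarrow> (nat \<Rightarrow> real) \<Rightarrow> (nat \<Rightarrow> nat) \<Rightarrow> nat \<Rightarrow> cg_state \<Rightarrow> cg_state \<Rightarrow> bool"
  for G yv ps \<sigma> k where
  stop: "\<not> cost c \<pi> > 0 \<Longrightarrow> cg_step G yv ps \<sigma> k (Running A c \<pi>) (Returned A c \<pi>)"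
| opt_zero: "cost c \<pi> > 0 \<Longrightarrow> simplex_result k (pvec ps \<sigma> k) A c B \<pi>1 z
       \<Longrightarrow> \<not> cost c \<pi>1 > 0
       \<Longrightarrow> cg_step G yv ps \<sigma> k (Running A c \<pi>) (Returned A c \<pi>1)"
| no: "cost c \<pi> > 0 \<Longrightarrow> simplex_result k (pvec ps \<sigma> k) A c B \<pi>1 z
       \<Longrightarrow> cost c \<pi>1 > 0
       \<Longrightarrow> \<not> (\<exists>y. is_column k y \<and> gamma_consistent G yv \<sigma> k y \<and> dotk k z y > 0)
       \<Longrightarrow> cg_step G yv ps \<sigma> k (Running A c \<pi>) Answer_No"
| add: "cost c \<pi> > 0 \<Longrightarrow> simplex_result k (pvec ps \<sigma> k) A c B \<pi>1 z
       \<Longrightarrow> cost c \<pi>1 > 0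
       \<Longrightarrow> is_column k y \<Longrightarrow> gamma_consistent G yv \<sigma> k y \<Longrightarrow> dotk k z y > 0
       \<Longrightarrow> l \<le> k \<Longrightarrow> is_bfs k (pvec ps \<sigma> k) (A @ [y]) (B[l := length A]) \<pi>2
       \<Longrightarrow> cg_step G yv ps \<sigma> k (Running A c \<pi>) (Running (A @ [y]) (c @ [0]) \<pi>2)"

definition cg_final :: "cg_state \<Rightarrow> bool" where
  "cg_final s \<longleftrightarrow> (case s of Running _ _ _ \<Rightarrow> False | _ \<Rightarrow> True)"

end

(* The loop keeps a feasible solution pi >= 0 of A pi = p whose cost is the weight on
   Gamma-inconsistent columns. An added column y is Gamma-consistent and has positive price z'y,
   whereas every consistent column already present has price at most its cost 0; so columns are
   never repeated, and as there are finitely many 0/1 columns the loop terminates.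
   If it returns with cost 0, all weight sits on consistent columns and the valuations extending
   them form a satisfying distribution. If it answers "No", then z'y <= 0 for every consistent
   column y while z'p = c'pi > 0; a satisfying distribution would write p as a convex combination
   of consistent columns, contradicting weak duality.
   The simplex steps the loop relies on exist: an optimal basis comes from the lexicographic rule
   (a lexicographically feasible basis with lexicographically least objective row has no improving
   column), and a column of positive price enters by the ratio test, the objective being bounded
   below because c >= 0. *)

theory Submission
  imports Defs "Jordan_Normal_Form.Determinant"
begin

section \<open>Coordinates with respect to a basis\<close>

lemma independent_vectors_span:
  fixes V :: "nat \<Rightarrow> nat \<Rightarrow> real"
  assumes indep: "\<forall>u::nat \<Rightarrow> real. (\<forall>r\<le>k. (\<Sum>i\<le>k. u i * V i r) = 0) \<longrightarrow> (\<forall>i\<le>k. u i = 0)"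
  shows "\<exists>u. \<forall>r\<le>k. (\<Sum>i\<le>k. u i * V i r) = b r"
proof -
  define M where "M = mat (Suc k) (Suc k) (\<lambda>(r, i). V i r)"
  have M: "M \<in> carrier_mat (Suc k) (Suc k)" by (simp add: M_def)
  have M_mult: "(M *\<^sub>v v) $ r = (\<Sum>i\<le>k. v $ i * V i r)" if "r \<le> k" "v \<in> carrier_vec (Suc k)" for v r
    using that
    by (simp add: M_def scalar_prod_def atLeast0LessThan lessThan_Suc_atMost mult.commute)
  have "det M \<noteq> 0"
  proof
    assume "det M = 0"
    then obtain v where v: "v \<in> carrier_vec (Suc k)" "v \<noteq> 0\<^sub>v (Suc k)" "M *\<^sub>v v = 0\<^sub>v (Suc k)"
      using det_0_iff_vec_prod_zero[OF M] by blast
    have "\<forall>i\<le>k. v $ i = 0"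
      using indep[rule_format, of "\<lambda>i. v $ i"] M_mult[OF _ v(1)] v(3)
      by (metis index_zero_vec(1) le_imp_less_Suc)
    then show False using v(1,2) by (auto simp: vec_eq_iff less_Suc_eq_le)
  qed
  then obtain N where N: "N \<in> carrier_mat (Suc k) (Suc k)" "M * N = 1\<^sub>m (Suc k)"
    using det_non_zero_imp_unit[OF M, of "()"] by (auto simp: Units_def ring_mat_def)
  define u where "u = N *\<^sub>v vec (Suc k) b"
  have "M *\<^sub>v u = vec (Suc k) b"
    using M N by (simp add: u_def assoc_mult_mat_vec[symmetric, of _ "Suc k" "Suc k" _ "Suc k"])
  then show ?thesis using M_mult[of _ u] N(1) by (intro exI[of _ "\<lambda>i. u $ i"]) (auto simp: u_def)
qed

definition basis_combination ::
  "nat \<Rightarrow> real list list \<Rightarrow> nat list \<Rightarrow> (nat \<Rightarrow> real) \<Rightarrow> (nat \<Rightarrow> real) \<Rightarrow> bool" where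
  "basis_combination k A B u b \<longleftrightarrow> (\<forall>r\<le>k. (\<Sum>i\<le>k. u i * A ! (B ! i) ! r) = b r)"

definition basis_coords :: "nat \<Rightarrow> real list list \<Rightarrow> nat list \<Rightarrow> (nat \<Rightarrow> real) \<Rightarrow> nat \<Rightarrow> real" where
  "basis_coords k A B b = (SOME u. basis_combination k A B u b)"

lemma is_basisD:
  assumes "is_basis k A B"
  shows "length B = k + 1" "distinct B" "set B \<subseteq> {..<length A}"
  using assms by (auto simp: is_basis_def)

lemma is_basis_nth_less: "is_basis k A B \<Longrightarrow> i \<le> k \<Longrightarrow> B ! i < length A"
  by (metis is_basisD(1,3) Suc_eq_plus1 le_imp_less_Suc lessThan_iff nth_mem subsetD)

lemma is_basis_nth_update:
  "is_basis k A B \<Longrightarrow> l \<le> k \<Longrightarrow> i \<le> k \<Longrightarrow> B[l := j] ! i = (if i = l then j else B ! i)"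
  using is_basisD(1) by (simp add: nth_list_update)

lemma basis_coords_combination:
  assumes "is_basis k A B"
  shows "basis_combination k A B (basis_coords k A B b) b"
proof -
  have "\<exists>u. basis_combination k A B u b"
    using assms unfolding is_basis_def basis_combination_def
    by (intro independent_vectors_span) simp
  then show ?thesis unfolding basis_coords_def by (rule someI_ex)
qed

lemma basis_coords_eqI:
  assumes B: "is_basis k A B" and u: "basis_combination k A B u b" and i: "i \<le> k"
  shows "basis_coords k A B b i = u i"
proof -
  have "\<forall>r\<le>k. (\<Sum>i\<le>k. (basis_coords k A B b i - u i) * A ! (B ! i) ! r) = 0"
    using basis_coords_combination[OF B, of b] u
    by (simp add: basis_combination_def left_diff_distrib sum_subtractf)
  then show ?thesis using B i unfolding is_basis_def by force
qed

lemma basis_coords_cong: "(\<And>r. r \<le> k \<Longrightarrow> b r = b' r) \<Longrightarrow> basis_coords k A B b = basis_coords k A B b'"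
  unfolding basis_coords_def basis_combination_def by simp

lemma basis_coords_basis_column:
  assumes "is_basis k A B" "m \<le> k" "i \<le> k"
  shows "basis_coords k A B (\<lambda>r. A ! (B ! m) ! r) i = (if i = m then 1 else 0)"
  using assms by (intro basis_coords_eqI)
    (auto simp: basis_combination_def if_distrib[of "\<lambda>a. a * _"] cong: if_cong)

lemma basis_coords_sum:
  assumes B: "is_basis k A B" and "finite M" and i: "i \<le> k"
  shows "basis_coords k A B (\<lambda>r. \<Sum>m\<in>M. t m * f m r) i = (\<Sum>m\<in>M. t m * basis_coords k A B (f m) i)"
proof (rule basis_coords_eqI[OF B _ i], unfold basis_combination_def, intro allI impI)
  fix r assume r: "r \<le> k"
  have "(\<Sum>i\<le>k. (\<Sum>m\<in>M. t m * basis_coords k A B (f m) i) * A ! (B ! i) ! r)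
      = (\<Sum>m\<in>M. t m * (\<Sum>i\<le>k. basis_coords k A B (f m) i * A ! (B ! i) ! r))"
    by (simp add: sum_distrib_left sum_distrib_right mult.assoc sum.swap[of _ M])
  also have "\<dots> = (\<Sum>m\<in>M. t m * f m r)"
    using basis_coords_combination[OF B] r by (simp add: basis_combination_def)
  finally show "(\<Sum>i\<le>k. (\<Sum>m\<in>M. t m * basis_coords k A B (f m) i) * A ! (B ! i) ! r)
      = (\<Sum>m\<in>M. t m * f m r)" .
qed

lemma is_basis_pivot:
  assumes B: "is_basis k A B" and l: "l \<le> k" and j: "j < length A'" "j \<notin> set B"
    and sub: "set B \<subseteq> {..<length A'}"
    and same: "\<And>i. i \<le> k \<Longrightarrow> A' ! (B ! i) = A ! (B ! i)"
    and d: "basis_combination k A B d (\<lambda>r. A' ! j ! r)" and dl: "d l \<noteq> 0"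
  shows "is_basis k A' (B[l := j])"
proof -
  note B'_nth = is_basis_nth_update[OF B l]
  have "\<forall>i\<le>k. u i = 0" if u: "\<forall>r\<le>k. (\<Sum>i\<le>k. u i * A' ! (B[l := j] ! i) ! r) = 0" for u
  proof -
    \<comment> \<open>replace the entering column by its expansion in the old basis\<close>
    define v where "v i = (if i = l then 0 else u i) + u l * d i" for i
    have "(\<Sum>i\<le>k. v i * A ! (B ! i) ! r) = 0" if r: "r \<le> k" for r
    proof -
      have "(\<Sum>i\<le>k. v i * A ! (B ! i) ! r)
          = (\<Sum>i\<le>k. (if i = l then 0 else u i * A ! (B ! i) ! r))
            + u l * (\<Sum>i\<le>k. d i * A ! (B ! i) ! r)"
        by (simp add: v_def algebra_simps sum.distrib sum_distrib_left if_distrib[of "\<lambda>a. a * _"]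
            cong: if_cong)
      also have "\<dots> = (\<Sum>i\<le>k. (if i = l then 0 else u i * A ! (B ! i) ! r)
                             + (if i = l then u l * A' ! j ! r else 0))"
        using d r l by (simp add: basis_combination_def sum.distrib)
      also have "\<dots> = (\<Sum>i\<le>k. u i * A' ! (B[l := j] ! i) ! r)"
        by (rule sum.cong) (auto simp: B'_nth same)
      finally show ?thesis using u r by simp
    qed
    then have v0: "\<forall>i\<le>k. v i = 0" using B unfolding is_basis_def by blast
    then have "u l = 0" using v0[rule_format, OF l] dl by (simp add: v_def)
    then show ?thesis using v0 by (auto simp: v_def split: if_splits)
  qed
  moreover have "distinct (B[l := j])" using is_basisD(2)[OF B] j(2)
    by (intro distinct_list_update) auto
  moreover have "set (B[l := j]) \<subseteq> {..<length A'}" using set_update_subset_insert[of B l j] sub j(1)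
    by auto
  ultimately show ?thesis using is_basisD(1)[OF B] by (simp add: is_basis_def)
qed

definition pivot :: "(nat \<Rightarrow> real) \<Rightarrow> nat \<Rightarrow> (nat \<Rightarrow> real) \<Rightarrow> nat \<Rightarrow> real" where
  "pivot d l x i = (if i = l then x l / d l else x i - d i * x l / d l)"

lemma basis_coords_pivot:
  assumes B: "is_basis k A B" and B': "is_basis k A' (B[l := j])" and l: "l \<le> k"
    and same: "\<And>i. i \<le> k \<Longrightarrow> A' ! (B ! i) = A ! (B ! i)"
    and d: "basis_combination k A B d (\<lambda>r. A' ! j ! r)" and dl: "d l \<noteq> 0" and i: "i \<le> k"
  shows "basis_coords k A' (B[l := j]) b i = pivot d l (basis_coords k A B b) i"
proof (rule basis_coords_eqI[OF B' _ i], unfold basis_combination_def, intro allI impI)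
  fix r assume r: "r \<le> k"
  define x where "x = basis_coords k A B b"
  note B'_nth = is_basis_nth_update[OF B l]
  have "(\<Sum>i\<le>k. pivot d l x i * A' ! (B[l := j] ! i) ! r)
      = (\<Sum>i\<le>k. x i * A ! (B ! i) ! r - x l / d l * (d i * A ! (B ! i) ! r)
               + (if i = l then x l / d l * A' ! j ! r else 0))"
    by (rule sum.cong) (use dl in \<open>auto simp: pivot_def B'_nth same algebra_simps\<close>)
  also have "\<dots> = (\<Sum>i\<le>k. x i * A ! (B ! i) ! r)
      - x l / d l * (\<Sum>i\<le>k. d i * A ! (B ! i) ! r) + x l / d l * A' ! j ! r"
    using l by (simp add: sum.distrib sum_subtractf sum_distrib_left)
  also have "\<dots> = b r"
    using d r basis_coords_combination[OF B, of b] by (simp add: basis_combination_def x_def)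
  finally show "(\<Sum>i\<le>k. pivot d l (basis_coords k A B b) i * A' ! (B[l := j] ! i) ! r) = b r"
    by (simp add: x_def)
qed

section \<open>Basic feasible solutions and optimality\<close>

definition basic_vector :: "nat \<Rightarrow> nat \<Rightarrow> nat list \<Rightarrow> (nat \<Rightarrow> real) \<Rightarrow> real list" where
  "basic_vector n k B x = map (\<lambda>j. \<Sum>i\<le>k. if B ! i = j then x i else 0) [0..<n]"

lemma basic_vector_nth_basic:
  assumes "distinct B" "length B = k + 1" "m \<le> k" "B ! m < n"
  shows "basic_vector n k B x ! (B ! m) = x m"
proof -
  have "\<And>i. i \<le> k \<Longrightarrow> B ! i = B ! m \<longleftrightarrow> i = m" using assms by (simp add: nth_eq_iff_index_eq)
  then show ?thesis using assms by (simp add: basic_vector_def sum.delta cong: if_cong)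
qed

lemma basic_vector_nth_nonbasic:
  assumes "length B = k + 1" "j < n" "j \<notin> set B"
  shows "basic_vector n k B x ! j = 0"
  using assms by (auto simp: basic_vector_def in_set_conv_nth intro!: sum.neutral)

lemma mat_vec_basic_vector:
  assumes "is_basis k A B"
  shows "mat_vec A (basic_vector (length A) k B x) r = (\<Sum>i\<le>k. x i * A ! (B ! i) ! r)"
proof -
  have "mat_vec A (basic_vector (length A) k B x) r
      = (\<Sum>j<length A. \<Sum>i\<le>k. if B ! i = j then x i * A ! j ! r else 0)"
    unfolding mat_vec_def basic_vector_def
    by (simp add: sum_distrib_left if_distrib[of "\<lambda>a. _ * a"] mult.commute cong: if_cong)
  also have "\<dots> = (\<Sum>i\<le>k. \<Sum>j<length A. if B ! i = j then x i * A ! j ! r else 0)"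
    by (rule sum.swap)
  also have "\<dots> = (\<Sum>i\<le>k. x i * A ! (B ! i) ! r)"
    by (intro sum.cong) (simp_all add: sum.delta is_basis_nth_less[OF assms])
  finally show ?thesis .
qed

lemma is_bfs_basic_vector:
  assumes B: "is_basis k A B" and x: "\<forall>i\<le>k. 0 \<le> basis_coords k A B (\<lambda>r. p ! r) i"
  shows "is_bfs k p A B (basic_vector (length A) k B (basis_coords k A B (\<lambda>r. p ! r)))"
  unfolding is_bfs_def feasible_def
proof (intro conjI allI impI)
  fix r assume "r \<le> k"
  then show "mat_vec A (basic_vector (length A) k B (basis_coords k A B (\<lambda>r. p ! r))) r = p ! r"
    using basis_coords_combination[OF B]
    by (simp add: mat_vec_basic_vector[OF B] basis_combination_def)
next
  fix j assume "j < length A" "j \<notin> set B"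
  then show "basic_vector (length A) k B (basis_coords k A B (\<lambda>r. p ! r)) ! j = 0"
    using basic_vector_nth_nonbasic is_basisD(1)[OF B] by blast
qed (use B x in \<open>auto simp: basic_vector_def intro!: sum_nonneg\<close>)

lemma is_bfs_basis_coords:
  assumes bfs: "is_bfs k p A B \<pi>" and i: "i \<le> k"
  shows "\<pi> ! (B ! i) = basis_coords k A B (\<lambda>r. p ! r) i"
proof -
  have B: "is_basis k A B" and feas: "feasible k p A \<pi>" using bfs by (auto simp: is_bfs_def)
  have "basic_vector (length A) k B (\<lambda>i. \<pi> ! (B ! i)) = \<pi>"
  proof (rule nth_equalityI)
    show "length (basic_vector (length A) k B (\<lambda>i. \<pi> ! (B ! i))) = length \<pi>"
      using feas by (simp add: feasible_def basic_vector_def)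
    fix j assume "j < length (basic_vector (length A) k B (\<lambda>i. \<pi> ! (B ! i)))"
    then have j: "j < length A" by (simp add: basic_vector_def)
    show "basic_vector (length A) k B (\<lambda>i. \<pi> ! (B ! i)) ! j = \<pi> ! j"
    proof (cases "j \<in> set B")
      case True
      then obtain m where "m < length B" "j = B ! m" by (auto simp: in_set_conv_nth)
      then show ?thesis using basic_vector_nth_basic is_basisD[OF B] j by simp
    qed (use bfs j basic_vector_nth_nonbasic is_basisD(1)[OF B] in \<open>auto simp: is_bfs_def\<close>)
  qed
  then have "mat_vec A \<pi> r = (\<Sum>i\<le>k. \<pi> ! (B ! i) * A ! (B ! i) ! r)" for r
    using mat_vec_basic_vector[OF B, of "\<lambda>i. \<pi> ! (B ! i)" r] by simp
  then have "basis_combination k A B (\<lambda>i. \<pi> ! (B ! i)) (\<lambda>r. p ! r)"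
    using feas by (simp add: basis_combination_def feasible_def)
  then show ?thesis using basis_coords_eqI[OF B _ i] by simp
qed

definition basis_dual :: "nat \<Rightarrow> real list list \<Rightarrow> real list \<Rightarrow> nat list \<Rightarrow> real list" where
  "basis_dual k A c B =
     map (\<lambda>r. \<Sum>i\<le>k. c ! (B ! i) * basis_coords k A B (\<lambda>r'. if r' = r then 1 else 0) i) [0..<k+1]"

lemma dotk_basis_dual:
  assumes B: "is_basis k A B"
  shows "dotk k (basis_dual k A c B) a = (\<Sum>i\<le>k. c ! (B ! i) * basis_coords k A B (\<lambda>r. a ! r) i)"
proof -
  define e where "e r = (\<lambda>r'::nat. if r' = r then 1 else 0 :: real)" for r :: nat
  have "dotk k (basis_dual k A c B) a
      = (\<Sum>r\<le>k. (\<Sum>i\<le>k. c ! (B ! i) * basis_coords k A B (e r) i) * a ! r)"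
    unfolding dotk_def by (rule sum.cong) (simp_all del: upt_Suc add: basis_dual_def e_def nth_upt)
  also have "\<dots> = (\<Sum>r\<le>k. \<Sum>i\<le>k. c ! (B ! i) * (a ! r * basis_coords k A B (e r) i))"
    by (simp add: sum_distrib_left sum_distrib_right mult_ac)
  also have "\<dots> = (\<Sum>i\<le>k. \<Sum>r\<le>k. c ! (B ! i) * (a ! r * basis_coords k A B (e r) i))"
    by (rule sum.swap)
  also have "\<dots> = (\<Sum>i\<le>k. c ! (B ! i) * basis_coords k A B (\<lambda>r'. \<Sum>r\<le>k. a ! r * e r r') i)"
    by (simp add: sum_distrib_left basis_coords_sum[OF B])
  also have "\<dots> = (\<Sum>i\<le>k. c ! (B ! i) * basis_coords k A B (\<lambda>r. a ! r) i)"
    by (subst basis_coords_cong[of k "\<lambda>r'. \<Sum>r\<le>k. a ! r * e r r'" "\<lambda>r. a ! r"])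
      (simp_all add: e_def if_distrib[of "\<lambda>x. _ * x"] cong: if_cong)
  finally show ?thesis .
qed

lemma dotk_dual_basis_coords:
  assumes B: "is_basis k A B" and z: "\<forall>i\<le>k. dotk k z (A ! (B ! i)) = c ! (B ! i)"
  shows "dotk k z a = (\<Sum>i\<le>k. c ! (B ! i) * basis_coords k A B (\<lambda>r. a ! r) i)"
proof -
  define d where "d = basis_coords k A B (\<lambda>r. a ! r)"
  have "dotk k z a = (\<Sum>r\<le>k. z ! r * (\<Sum>i\<le>k. d i * A ! (B ! i) ! r))"
    using basis_coords_combination[OF B, of "\<lambda>r. a ! r"]
    by (simp add: dotk_def basis_combination_def d_def)
  also have "\<dots> = (\<Sum>r\<le>k. \<Sum>i\<le>k. d i * (z ! r * A ! (B ! i) ! r))"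
    by (simp add: sum_distrib_left mult_ac)
  also have "\<dots> = (\<Sum>i\<le>k. d i * dotk k z (A ! (B ! i)))"
    by (subst sum.swap) (simp add: dotk_def sum_distrib_left)
  also have "\<dots> = (\<Sum>i\<le>k. c ! (B ! i) * d i)" using z by (simp add: mult.commute)
  finally show ?thesis by (simp add: d_def)
qed

lemma simplex_result_basis:
  assumes B: "is_basis k A B" and x: "\<forall>i\<le>k. 0 \<le> basis_coords k A B (\<lambda>r. p ! r) i"
    and opt: "\<forall>j<length A. (\<Sum>i\<le>k. c ! (B ! i) * basis_coords k A B (\<lambda>r. A ! j ! r) i) \<le> c ! j"
  shows "simplex_result k p A c B (basic_vector (length A) k B (basis_coords k A B (\<lambda>r. p ! r)))
           (basis_dual k A c B)"
  unfolding simplex_result_def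
proof (intro conjI allI impI)
  fix i assume i: "i \<le> k"
  then show "dotk k (basis_dual k A c B) (A ! (B ! i)) = c ! (B ! i)"
    by (simp add: dotk_basis_dual[OF B] basis_coords_basis_column[OF B i] if_distrib[of "\<lambda>a. _ * a"]
        cong: if_cong)
next
  fix j assume "j < length A"
  then show "dotk k (basis_dual k A c B) (A ! j) \<le> c ! j" using opt
    by (simp add: dotk_basis_dual[OF B])
qed (simp_all add: is_bfs_basic_vector[OF B x] basis_dual_def)

lemma cost_eq_dotk_dual:
  assumes sr: "simplex_result k p A c B \<pi> z" and lc: "length c = length A"
  shows "cost c \<pi> = dotk k z p"
proof -
  have bfs: "is_bfs k p A B \<pi>" and B: "is_basis k A B" and feas: "feasible k p A \<pi>"
    using sr by (auto simp: simplex_result_def is_bfs_def)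
  have "c ! j * \<pi> ! j = dotk k z (A ! j) * \<pi> ! j" if "j < length A" for j
  proof (cases "j \<in> set B")
    case True
    then obtain i where "i < length B" "j = B ! i" by (auto simp: in_set_conv_nth)
    then show ?thesis using sr is_basisD(1)[OF B] by (simp add: simplex_result_def)
  qed (use bfs that in \<open>simp add: is_bfs_def\<close>)
  then have "cost c \<pi> = (\<Sum>j<length A. \<Sum>r\<le>k. z ! r * (A ! j ! r * \<pi> ! j))"
    unfolding cost_def lc dotk_def by (simp add: sum_distrib_right mult.assoc)
  also have "\<dots> = (\<Sum>r\<le>k. z ! r * mat_vec A \<pi> r)"
    unfolding mat_vec_def by (simp add: sum_distrib_left sum.swap[of _ "{..<length A}"])
  also have "\<dots> = dotk k z p" using feas by (simp add: feasible_def dotk_def)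
  finally show ?thesis .
qed

lemma sum_pos_imp_pos_factor:
  fixes c d :: "nat \<Rightarrow> real"
  assumes "\<forall>i\<le>k. 0 \<le> c i" "0 < (\<Sum>i\<le>k. c i * d i)"
  shows "\<exists>i\<le>k. 0 < d i"
proof (rule ccontr)
  assume "\<not> ?thesis"
  then have "(\<Sum>i\<le>k. c i * d i) \<le> 0" using assms(1)
    by (intro sum_nonpos) (simp add: mult_nonneg_nonpos not_less)
  then show False using assms(2) by simp
qed

lemma pivot_nonneg:
  fixes x d :: "nat \<Rightarrow> real"
  assumes "0 \<le> x i" "0 \<le> x l" "0 < d l" "0 < d i \<Longrightarrow> x l / d l \<le> x i / d i"
  shows "0 \<le> pivot d l x i"
proof (cases "0 < d i")
  case True
  then have "d i * (x l / d l) \<le> x i" using assms(4) by (simp add: pos_le_divide_eq mult.commute)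
  then show ?thesis using assms(2,3) by (simp add: pivot_def)
next
  case False
  then have "d i * x l \<le> 0" using assms(2) by (simp add: mult_nonpos_nonneg)
  then have "d i * x l / d l \<le> 0" using assms(3) by (simp add: divide_nonpos_pos)
  then show ?thesis using assms(1-3) by (simp add: pivot_def)
qed

lemma simplex_result_entering_column:
  assumes sr: "simplex_result k p A c B \<pi> z" and c0: "\<forall>j<length A. 0 \<le> c ! j"
    and zy: "0 < dotk k z y"
  shows "\<exists>l\<le>k. \<exists>\<pi>'. is_bfs k p (A @ [y]) (B[l := length A]) \<pi>'"
proof -
  have bfs: "is_bfs k p A B \<pi>" and B: "is_basis k A B"
    using sr by (auto simp: simplex_result_def is_bfs_def)
  define x where "x = basis_coords k A B (\<lambda>r. p ! r)"
  define d where "d = basis_coords k A B (\<lambda>r. y ! r)"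
  have x0: "0 \<le> x i" if "i \<le> k" for i
    using is_bfs_basis_coords[OF bfs that] bfs is_basis_nth_less[OF B that]
    unfolding x_def is_bfs_def feasible_def by metis
  have "0 < (\<Sum>i\<le>k. c ! (B ! i) * d i)"
    using zy dotk_dual_basis_coords[OF B, of z c y] sr by (simp add: simplex_result_def d_def)
  then have "\<exists>i\<le>k. 0 < d i"
    using c0 is_basis_nth_less[OF B] by (intro sum_pos_imp_pos_factor[of k "\<lambda>i. c ! (B ! i)"]) auto
  define I where "I = {i. i \<le> k \<and> 0 < d i}"
  define l where "l = arg_min_on (\<lambda>i. x i / d i) I"
  have I: "finite I" "I \<noteq> {}" using \<open>\<exists>i\<le>k. 0 < d i\<close> by (auto simp: I_def)
  have l: "l \<le> k" "0 < d l" using arg_min_if_finite(1)[OF I] by (auto simp: l_def I_def)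
  have ratio: "x l / d l \<le> x i / d i" if "i \<le> k" "0 < d i" for i
  proof -
    have "i \<in> I" using that by (simp add: I_def)
    from arg_min_least[OF I this, where f = "\<lambda>i. x i / d i"] show ?thesis by (simp add: l_def)
  qed
  have same: "(A @ [y]) ! (B ! i) = A ! (B ! i)" if "i \<le> k" for i
    using is_basis_nth_less[OF B that] by (simp add: nth_append)
  have d: "basis_combination k A B d (\<lambda>r. (A @ [y]) ! length A ! r)"
    using basis_coords_combination[OF B] by (simp add: d_def)
  have B': "is_basis k (A @ [y]) (B[l := length A])"
    using is_basisD(3)[OF B] l by (intro is_basis_pivot[OF B _ _ _ _ same d]) auto
  have "0 \<le> basis_coords k (A @ [y]) (B[l := length A]) (\<lambda>r. p ! r) i" if "i \<le> k" for i
    using basis_coords_pivot[OF B B' l(1) same d _ that] pivot_nonneg[of x i l d] x0 that l ratio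
    by (simp add: x_def)
  then show ?thesis using is_bfs_basic_vector[OF B'] l(1) by blast
qed

section \<open>The lexicographic simplex rule\<close>

definition lex_pos :: "nat \<Rightarrow> (nat \<Rightarrow> real) \<Rightarrow> bool" where
  "lex_pos K v \<longleftrightarrow> (\<exists>m\<le>K. (\<forall>m'<m. v m' = 0) \<and> 0 < v m)"

lemma lex_pos_add:
  assumes "lex_pos K v" "lex_pos K w"
  shows "lex_pos K (\<lambda>m. v m + w m)"
proof -
  obtain m1 where m1: "m1 \<le> K" "\<forall>m'<m1. v m' = 0" "0 < v m1" using assms(1) lex_pos_def by blast
  obtain m2 where m2: "m2 \<le> K" "\<forall>m'<m2. w m' = 0" "0 < w m2" using assms(2) lex_pos_def by blast
  show ?thesis unfolding lex_pos_def
    by (rule exI[of _ "min m1 m2"]) (cases m1 m2 rule: linorder_cases; use m1 m2 in auto)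
qed

lemma lex_pos_scale: "lex_pos K v \<Longrightarrow> 0 < t \<Longrightarrow> lex_pos K (\<lambda>m. t * v m)"
  unfolding lex_pos_def by auto

lemma lex_pos_cong:
  assumes "lex_pos K v" "\<And>m. m \<le> K \<Longrightarrow> v m = w m"
  shows "lex_pos K w"
proof -
  obtain m where "m \<le> K" "\<forall>m'<m. v m' = 0" "0 < v m" using assms(1) lex_pos_def by blast
  then show ?thesis unfolding lex_pos_def using assms(2) by (intro exI[of _ m]) auto
qed

lemma lex_pos_first_nonneg:
  assumes "lex_pos K v"
  shows "0 \<le> v 0"
proof -
  obtain m where "\<forall>m'<m. v m' = 0" "0 < v m" using assms lex_pos_def by blast
  then show ?thesis by (cases m) auto
qed

lemma lex_pos_asym:
  assumes "lex_pos K v"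
  shows "\<not> lex_pos K (\<lambda>m. - v m)"
proof
  assume "lex_pos K (\<lambda>m. - v m)"
  with assms have "lex_pos K (\<lambda>m. v m + - v m)" by (rule lex_pos_add)
  then show False by (simp add: lex_pos_def)
qed

lemma lex_pos_cases:
  assumes "m0 \<le> K" "v m0 \<noteq> 0"
  shows "lex_pos K v \<or> lex_pos K (\<lambda>m. - v m)"
proof -
  define m where "m = (LEAST m. v m \<noteq> 0)"
  have "v m \<noteq> 0" unfolding m_def using assms(2) by (rule LeastI)
  moreover have "m \<le> m0" unfolding m_def using assms(2) by (rule Least_le)
  moreover have "\<forall>m'<m. v m' = 0" unfolding m_def using not_less_Least by blast
  ultimately show ?thesis using assms(1) unfolding lex_pos_def
    by (cases "0 < v m") (auto intro!: exI[of _ m])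
qed

lemma lex_minimal_exists:
  fixes f :: "'b \<Rightarrow> nat \<Rightarrow> real"
  assumes "finite S" "S \<noteq> {}"
  shows "\<exists>x\<in>S. \<forall>y\<in>S. \<not> lex_pos K (\<lambda>m. f x m - f y m)"
proof -
  define R where "R y x \<longleftrightarrow> lex_pos K (\<lambda>m. f x m - f y m)" for y x
  have "asymp_on S R"
  proof (rule asymp_onI)
    fix x y assume "R x y"
    then show "\<not> R y x" using lex_pos_asym[of K "\<lambda>m. f y m - f x m"] by (simp add: R_def)
  qed
  moreover have "transp_on S R"
  proof (rule transp_onI)
    fix x y z assume "R x y" "R y z"
    then show "R x z"
      using lex_pos_add[of K "\<lambda>m. f y m - f x m" "\<lambda>m. f z m - f y m"] by (simp add: R_def)
  qed
  ultimately obtain x where "x \<in> S" "\<forall>y\<in>S. y \<noteq> x \<longrightarrow> \<not> R y x"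
    using Finite_Set.bex_min_element[OF assms(1)] assms(2) by blast
  moreover have "\<not> R x x" by (simp add: R_def lex_pos_def)
  ultimately have "\<forall>y\<in>S. \<not> R y x" by metis
  then show ?thesis using \<open>x \<in> S\<close> unfolding R_def by blast
qed

lemma lex_pos_pivot:
  fixes W :: "nat \<Rightarrow> nat \<Rightarrow> real"
  assumes Wi: "lex_pos K (W i)" and Wl: "lex_pos K (W l)" and dl: "0 < d l"
    and ratio: "i \<noteq> l \<Longrightarrow> 0 < d i \<Longrightarrow> lex_pos K (\<lambda>m. W i m / d i - W l m / d l)"
  shows "lex_pos K (\<lambda>m. pivot d l (\<lambda>i. W i m) i)"
proof -
  consider "i = l" | "i \<noteq> l" "d i = 0" | "i \<noteq> l" "d i < 0" | "i \<noteq> l" "0 < d i"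
    by linarith
  then show ?thesis
  proof cases
    case 1
    then show ?thesis using lex_pos_scale[OF Wl, of "1 / d l"] dl by (simp add: pivot_def)
  next
    case 2
    then show ?thesis using Wi by (simp add: pivot_def)
  next
    case 3
    then have "lex_pos K (\<lambda>m. W i m + (- d i / d l) * W l m)"
      using dl by (intro lex_pos_add[OF Wi] lex_pos_scale[OF Wl]) (simp add: divide_neg_pos)
    then show ?thesis by (rule lex_pos_cong) (use 3 in \<open>simp add: pivot_def\<close>)
  next
    case 4
    then have "lex_pos K (\<lambda>m. d i * (W i m / d i - W l m / d l))"
      using ratio by (intro lex_pos_scale) auto
    then show ?thesis by (rule lex_pos_cong) (use 4 in \<open>simp add: pivot_def algebra_simps\<close>)
  qed
qed

text \<open>Row \<open>i\<close> of \<open>B\<^sup>-\<^sup>1 [p | A\<^sub>0 \<dots> A\<^sub>k]\<close>. Lexicographic positivity of all rows is feasibility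
  for the perturbed right-hand side \<open>p + \<Sum>\<^sub>j \<epsilon>\<^sup>j\<^sup>+\<^sup>1 A\<^sub>j\<close> with \<open>\<epsilon>\<close> infinitesimal, as in the
  lexicographic simplex rule.\<close>
definition lex_row :: "nat \<Rightarrow> real list \<Rightarrow> real list list \<Rightarrow> nat list \<Rightarrow> nat \<Rightarrow> nat \<Rightarrow> real" where
  "lex_row k p A B i m = basis_coords k A B (\<lambda>r. (if m = 0 then p else A ! (m - 1)) ! r) i"

definition lex_feasible :: "nat \<Rightarrow> real list \<Rightarrow> real list list \<Rightarrow> nat list \<Rightarrow> bool" where
  "lex_feasible k p A B \<longleftrightarrow> is_basis k A B \<and> (\<forall>i\<le>k. lex_pos (Suc k) (lex_row k p A B i))"

definition lex_objective ::
  "nat \<Rightarrow> real list \<Rightarrow> real list list \<Rightarrow> real list \<Rightarrow> nat list \<Rightarrow> nat \<Rightarrow> real" where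
  "lex_objective k p A c B m = (\<Sum>i\<le>k. c ! (B ! i) * lex_row k p A B i m)"

lemma sum_mult_if_le:
  "(\<Sum>i\<le>k. g i * (if r \<le> i then 1 else 0)) = (\<Sum>i=r..k. g i :: real)" for k r :: nat
  by (rule sum.mono_neutral_cong_right) auto

locale initial_columns =
  fixes k :: nat and A :: "real list list"
  assumes length_gt: "k < length A" and initial: "\<forall>j\<le>k. A ! j = A_init k ! j"
begin

lemma initial_entry: "j \<le> k \<Longrightarrow> r \<le> k \<Longrightarrow> A ! j ! r = (if r \<le> j then 1 else 0)"
  using initial unfolding A_init_def by (simp del: upt_Suc add: nth_upt less_Suc_eq_le)

lemma initial_combination:
  "r \<le> k \<Longrightarrow> (\<Sum>i\<le>k. u i * A ! ([0..<k+1] ! i) ! r) = (\<Sum>i=r..k. u i)"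
  by (simp del: upt_Suc add: nth_upt initial_entry sum_mult_if_le)

lemma initial_basis: "is_basis k A [0..<k+1]"
proof -
  have "\<forall>i\<le>k. u i = 0" if u: "\<forall>r\<le>k. (\<Sum>i\<le>k. u i * A ! ([0..<k+1] ! i) ! r) = 0" for u
  proof (intro allI impI)
    fix i assume i: "i \<le> k"
    have "(\<Sum>i=r..k. u i) = 0" if "r \<le> Suc k" for r
      using u initial_combination that by (cases "r = Suc k") auto
    then show "u i = 0" using sum.atLeast_Suc_atMost[OF i, of u] i by simp
  qed
  then show ?thesis using length_gt by (auto simp: is_basis_def)
qed

lemma basis_coords_initial:
  assumes "i \<le> k"
  shows "basis_coords k A [0..<k+1] b i = b i - (if i < k then b (Suc i) else 0)"
proof -
  define f where "f i = (if i \<le> k then b i else 0)" for i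
  have "basis_combination k A [0..<k+1] (\<lambda>i. f i - f (Suc i)) b"
    unfolding basis_combination_def
  proof (intro allI impI)
    fix r assume r: "r \<le> k"
    have "(\<Sum>i=r..k. f i - f (Suc i)) = - (\<Sum>i=r..k. f (Suc i) - f i)"
      by (simp add: sum_negf[symmetric])
    also have "\<dots> = b r" using r sum_Suc_diff[of r k f] by (simp add: f_def)
    finally show "(\<Sum>i\<le>k. (f i - f (Suc i)) * A ! ([0..<k+1] ! i) ! r) = b r"
      using initial_combination[OF r, of "\<lambda>i. f i - f (Suc i)"] by simp
  qed
  then show ?thesis using basis_coords_eqI[OF initial_basis _ assms] assms by (simp add: f_def)
qed

lemma lex_feasible_initial:
  assumes p_dec: "\<forall>i<k. p ! Suc i \<le> p ! i" and p_k: "0 \<le> p ! k"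
  shows "lex_feasible k p A [0..<k+1]"
proof -
  have "lex_pos (Suc k) (lex_row k p A [0..<k+1] i)" if i: "i \<le> k" for i
  proof -
    have rows: "lex_row k p A [0..<k+1] i m = (if i = m - 1 then 1 else 0)"
      if "0 < m" "m \<le> Suc k" for m
      using basis_coords_basis_column[OF initial_basis, of "m - 1" i] that i
      by (simp del: upt_Suc add: lex_row_def nth_upt)
    have row0: "0 \<le> lex_row k p A [0..<k+1] i 0"
      using basis_coords_initial[OF i] p_dec p_k i by (auto simp: lex_row_def)
    show ?thesis
    proof (cases "lex_row k p A [0..<k+1] i 0 = 0")
      case True
      then show ?thesis unfolding lex_pos_def using i rows
        by (intro exI[of _ "Suc i"]) (auto simp: less_Suc_eq_0_disj)
    next
      case False
      then show ?thesis unfolding lex_pos_def using row0 by (intro exI[of _ 0]) simp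
    qed
  qed
  then show ?thesis using initial_basis by (simp add: lex_feasible_def)
qed

text \<open>The columns \<open>A\<^sub>0, \<dots>, A\<^sub>k\<close> span, so distinct rows of \<open>B\<^sup>-\<^sup>1 [A\<^sub>0 \<dots> A\<^sub>k]\<close> are not proportional;
  this is what makes the lexicographic ratio test single out the leaving row.\<close>
lemma lex_rows_not_proportional:
  assumes B: "is_basis k A B" and i: "i \<le> k" and l: "l \<le> k" "i \<noteq> l"
  shows "\<exists>m\<in>{1..Suc k}. lex_row k p A B i m \<noteq> s * lex_row k p A B l m"
proof (rule ccontr)
  assume "\<not> ?thesis"
  then have proportional: "lex_row k p A B i (Suc m) = s * lex_row k p A B l (Suc m)"
    if "m \<le> k" for m
    using that by auto
  define t where "t = basis_coords k A [0..<k+1] (\<lambda>r. A ! (B ! i) ! r)"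
  have expand: "basis_coords k A B (\<lambda>r. A ! (B ! i) ! r) i'
      = (\<Sum>m\<le>k. t m * lex_row k p A B i' (Suc m))" if "i' \<le> k" for i'
  proof -
    have "basis_coords k A B (\<lambda>r. A ! (B ! i) ! r) = basis_coords k A B (\<lambda>r. \<Sum>m\<le>k. t m * A ! m ! r)"
      using basis_coords_combination[OF initial_basis, of "\<lambda>r. A ! (B ! i) ! r"]
      by (intro basis_coords_cong) (simp del: upt_Suc add: basis_combination_def t_def nth_upt)
    then show ?thesis
      using basis_coords_sum[OF B _ that, of "{..k}" t "\<lambda>m r. A ! m ! r"] by (simp add: lex_row_def)
  qed
  have "1 = (\<Sum>m\<le>k. t m * lex_row k p A B i (Suc m))"
    using expand[OF i] basis_coords_basis_column[OF B i i] by simp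
  also have "\<dots> = s * (\<Sum>m\<le>k. t m * lex_row k p A B l (Suc m))"
    by (simp add: proportional sum_distrib_left algebra_simps)
  also have "\<dots> = 0"
    using expand[OF l(1)] basis_coords_basis_column[OF B i l(1)] l(2) by simp
  finally show False by simp
qed

end

lemma improving_column_nonbasic:
  assumes B: "is_basis k A B"
    and "c ! j < (\<Sum>i\<le>k. c ! (B ! i) * basis_coords k A B (\<lambda>r. A ! j ! r) i)"
  shows "j \<notin> set B"
proof
  assume "j \<in> set B"
  then obtain m where "m < length B" "j = B ! m" by (auto simp: in_set_conv_nth)
  then have "(\<Sum>i\<le>k. c ! (B ! i) * basis_coords k A B (\<lambda>r. A ! j ! r) i) = c ! j"
    using basis_coords_basis_column[OF B, of m] is_basisD(1)[OF B]
    by (simp add: if_distrib[of "\<lambda>a. _ * a"] cong: if_cong)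
  then show False using assms(2) by simp
qed

lemma lex_row_pivot:
  assumes "is_basis k A B" "is_basis k A (B[l := j])" "l \<le> k"
    and "basis_combination k A B d (\<lambda>r. A ! j ! r)" "d l \<noteq> 0" "i \<le> k"
  shows "lex_row k p A (B[l := j]) i m = pivot d l (\<lambda>i. lex_row k p A B i m) i"
  using basis_coords_pivot[OF assms(1-3) _ assms(4-6)] by (simp add: lex_row_def)

lemma lex_objective_pivot:
  assumes B: "is_basis k A B" and B': "is_basis k A (B[l := j])" and l: "l \<le> k"
    and d: "basis_combination k A B d (\<lambda>r. A ! j ! r)" and dl: "d l \<noteq> 0"
  shows "lex_objective k p A c (B[l := j]) m = lex_objective k p A c B m
           - ((\<Sum>i\<le>k. c ! (B ! i) * d i) - c ! j) / d l * lex_row k p A B l m"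
proof -
  let ?W = "\<lambda>i. lex_row k p A B i m"
  note B'_nth = is_basis_nth_update[OF B l]
  have "lex_objective k p A c (B[l := j]) m
      = (\<Sum>i\<le>k. c ! (B ! i) * ?W i - c ! (B ! i) * d i * ?W l / d l
                 + (if i = l then c ! j * ?W l / d l else 0))"
    unfolding lex_objective_def
    by (rule sum.cong)
      (use dl in \<open>auto simp: B'_nth lex_row_pivot[OF B B' l d dl] pivot_def algebra_simps\<close>)
  also have "\<dots> = lex_objective k p A c B m
      - (\<Sum>i\<le>k. c ! (B ! i) * d i) * ?W l / d l + c ! j * ?W l / d l"
    using l by (simp add: lex_objective_def sum.distrib sum_subtractf sum_divide_distrib
        sum_distrib_right)
  finally show ?thesis by (simp add: algebra_simps diff_divide_distrib)
qed

context initial_columns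
begin

lemma lex_feasible_pivot:
  assumes B: "lex_feasible k p A B" and j: "j < length A" "j \<notin> set B"
    and d: "d = basis_coords k A B (\<lambda>r. A ! j ! r)" and l: "l \<le> k" "0 < d l"
    and l_min: "\<forall>i\<le>k. 0 < d i \<longrightarrow>
                  \<not> lex_pos (Suc k) (\<lambda>m. lex_row k p A B l m / d l - lex_row k p A B i m / d i)"
  shows "lex_feasible k p A (B[l := j])"
proof -
  let ?W = "lex_row k p A B"
  have Bb: "is_basis k A B" and W: "\<forall>i\<le>k. lex_pos (Suc k) (?W i)"
    using B by (auto simp: lex_feasible_def)
  have dc: "basis_combination k A B d (\<lambda>r. A ! j ! r)"
    using basis_coords_combination[OF Bb] d by simp
  have B': "is_basis k A (B[l := j])"
    using l is_basisD(3)[OF Bb] j by (intro is_basis_pivot[OF Bb _ _ _ _ _ dc]) auto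
  have "lex_pos (Suc k) (lex_row k p A (B[l := j]) i)" if i: "i \<le> k" for i
  proof -
    have ratio: "lex_pos (Suc k) (\<lambda>m. ?W i m / d i - ?W l m / d l)" if "i \<noteq> l" "0 < d i"
    proof -
      obtain m where m: "m \<le> Suc k" "?W i m \<noteq> (d i / d l) * ?W l m"
        using lex_rows_not_proportional[OF Bb i l(1) \<open>i \<noteq> l\<close>, where p = p and s = "d i / d l"]
        by auto
      then have "?W i m / d i - ?W l m / d l \<noteq> 0" using that l by (simp add: field_simps)
      then have "lex_pos (Suc k) (\<lambda>m. ?W i m / d i - ?W l m / d l)
          \<or> lex_pos (Suc k) (\<lambda>m. - (?W i m / d i - ?W l m / d l))"
        by (rule lex_pos_cases[OF m(1)])
      moreover have "\<not> lex_pos (Suc k) (\<lambda>m. ?W l m / d l - ?W i m / d i)"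
        using l_min i that by blast
      ultimately show ?thesis by simp
    qed
    have pivot_row: "lex_pos (Suc k) (\<lambda>m. pivot d l (\<lambda>i. ?W i m) i)"
      by (rule lex_pos_pivot) (use W i l ratio in auto)
    have pivot_eq: "pivot d l (\<lambda>i. ?W i m) i = lex_row k p A (B[l := j]) i m" for m
      using lex_row_pivot[OF Bb B' l(1) dc _ i] l by simp
    from pivot_row show ?thesis by (rule lex_pos_cong) (rule pivot_eq)
  qed
  then show ?thesis using B' by (simp add: lex_feasible_def)
qed

lemma lex_improving_pivot:
  assumes B: "lex_feasible k p A B" and c0: "\<forall>j<length A. 0 \<le> c ! j" and j: "j < length A"
    and improving: "c ! j < (\<Sum>i\<le>k. c ! (B ! i) * basis_coords k A B (\<lambda>r. A ! j ! r) i)"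
  shows "\<exists>B'. lex_feasible k p A B'
           \<and> lex_pos (Suc k) (\<lambda>m. lex_objective k p A c B m - lex_objective k p A c B' m)"
proof -
  let ?W = "lex_row k p A B"
  define d where "d = basis_coords k A B (\<lambda>r. A ! j ! r)"
  have Bb: "is_basis k A B" and W: "\<forall>i\<le>k. lex_pos (Suc k) (?W i)"
    using B by (auto simp: lex_feasible_def)
  have dc: "basis_combination k A B d (\<lambda>r. A ! j ! r)"
    using basis_coords_combination[OF Bb] d_def by simp
  have cB: "\<forall>i\<le>k. 0 \<le> c ! (B ! i)" using c0 is_basis_nth_less[OF Bb] by blast
  have jB: "j \<notin> set B" using improving_column_nonbasic[OF Bb improving] .
  define I where "I = {i. i \<le> k \<and> 0 < d i}"
  have "\<exists>i\<le>k. 0 < d i"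
    using improving c0 j cB
    by (intro sum_pos_imp_pos_factor[of k "\<lambda>i. c ! (B ! i)"]) (auto simp: d_def)
  then have "finite I" "I \<noteq> {}" by (auto simp: I_def)
  then obtain l where l: "l \<in> I"
    and l_min: "\<forall>i\<in>I. \<not> lex_pos (Suc k) (\<lambda>m. ?W l m / d l - ?W i m / d i)"
    using lex_minimal_exists[where S = I and f = "\<lambda>i m. ?W i m / d i"] by blast
  have lk: "l \<le> k" and dl: "0 < d l" using l by (auto simp: I_def)
  have B': "lex_feasible k p A (B[l := j])"
    using lex_feasible_pivot[OF B j jB d_def lk dl] l_min by (auto simp: I_def)
  have "lex_pos (Suc k) (\<lambda>m. ((\<Sum>i\<le>k. c ! (B ! i) * d i) - c ! j) / d l * ?W l m)"
    using improving dl W lk by (intro lex_pos_scale) (auto simp: d_def)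
  then have "lex_pos (Suc k) (\<lambda>m. lex_objective k p A c B m - lex_objective k p A c (B[l := j]) m)"
    by (rule lex_pos_cong)
      (use lex_objective_pivot[OF Bb _ lk dc] B' dl in \<open>simp add: lex_feasible_def\<close>)
  then show ?thesis using B' by blast
qed

lemma optimal_basis_exists:
  assumes c0: "\<forall>j<length A. 0 \<le> c ! j"
    and p_dec: "\<forall>i<k. p ! Suc i \<le> p ! i" and p_k: "0 \<le> p ! k"
  shows "\<exists>B \<pi> z. simplex_result k p A c B \<pi> z"
proof -
  define LF where "LF = {B. lex_feasible k p A B}"
  have "LF \<subseteq> {B. set B \<subseteq> {..<length A} \<and> length B = k + 1}"
    by (auto simp: LF_def lex_feasible_def is_basis_def)
  then have "finite LF"
    using finite_lists_length_eq[of "{..<length A}" "k + 1"] finite_subset by auto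
  moreover have "LF \<noteq> {}" using lex_feasible_initial[OF p_dec p_k] by (auto simp: LF_def)
  ultimately obtain B where B: "lex_feasible k p A B"
    and B_min: "\<forall>B'\<in>LF.
                 \<not> lex_pos (Suc k) (\<lambda>m. lex_objective k p A c B m - lex_objective k p A c B' m)"
    using lex_minimal_exists[where S = LF and f = "lex_objective k p A c"] by (auto simp: LF_def)
  have Bb: "is_basis k A B" using B by (simp add: lex_feasible_def)
  have "\<forall>j<length A. (\<Sum>i\<le>k. c ! (B ! i) * basis_coords k A B (\<lambda>r. A ! j ! r) i) \<le> c ! j"
    using lex_improving_pivot[OF B c0] B_min by (force simp: LF_def not_le)
  moreover have "\<forall>i\<le>k. 0 \<le> basis_coords k A B (\<lambda>r. p ! r) i"
    using B lex_pos_first_nonneg by (fastforce simp: lex_feasible_def lex_row_def)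
  ultimately show ?thesis using simplex_result_basis[OF Bb] by blast
qed

end

section \<open>Correctness of the column generation procedure\<close>

definition valuation_column ::
  "(nat \<Rightarrow> 'a) \<Rightarrow> (nat \<Rightarrow> nat) \<Rightarrow> nat \<Rightarrow> ('a \<Rightarrow> bool) \<Rightarrow> real list" where
  "valuation_column yv \<sigma> k v = map (\<lambda>r. if r = 0 \<or> v (yv (\<sigma> r)) then 1 else 0) [0..<k+1]"

lemma valuation_column_nth:
  "r \<le> k \<Longrightarrow> valuation_column yv \<sigma> k v ! r = (if r = 0 \<or> v (yv (\<sigma> r)) then 1 else 0)"
  by (simp del: upt_Suc add: valuation_column_def nth_upt less_Suc_eq_le)

lemma is_column_valuation_column: "is_column k (valuation_column yv \<sigma> k v)"
  by (simp add: is_column_def valuation_column_nth) (simp add: valuation_column_def)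

lemma gamma_consistent_valuation_column:
  "\<forall>g\<in>G. peval v g \<Longrightarrow> gamma_consistent G yv \<sigma> k (valuation_column yv \<sigma> k v)"
  unfolding gamma_consistent_def by (intro exI[of _ v]) (auto simp: valuation_column_nth)

lemma pvec_nth: "r \<le> k \<Longrightarrow> pvec ps \<sigma> k ! r = (if r = 0 then 1 else ps (\<sigma> r))"
  by (cases r) (simp_all del: upt_Suc add: pvec_def nth_upt)

lemma prob_one_imp_peval:
  fixes \<mu> :: "('a::finite \<Rightarrow> bool) \<Rightarrow> real"
  assumes "is_distribution \<mu>" "prob_of \<mu> g = 1" "0 < \<mu> v"
  shows "peval v g"
proof (rule ccontr)
  assume "\<not> peval v g"
  have \<mu>0: "\<forall>w. 0 \<le> \<mu> w" and \<mu>1: "(\<Sum>w\<in>UNIV. \<mu> w) = 1" using assms(1)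
    by (auto simp: is_distribution_def)
  have "prob_of \<mu> g \<le> (\<Sum>w\<in>UNIV - {v}. \<mu> w)"
    unfolding prob_of_def using \<open>\<not> peval v g\<close> \<mu>0 by (intro sum_mono2) auto
  also have "\<dots> = 1 - \<mu> v" using \<mu>1 by (simp add: sum_diff1)
  finally show False using assms(2,3) by simp
qed

lemma pvec_eq_expected_column:
  fixes \<mu> :: "('a::finite \<Rightarrow> bool) \<Rightarrow> real"
  assumes "is_distribution \<mu>" "\<forall>i\<in>{1..k}. prob_of \<mu> (PVar (yv i)) = ps i"
    and "bij_betw \<sigma> {1..k} {1..k}" "r \<le> k"
  shows "pvec ps \<sigma> k ! r = (\<Sum>v\<in>UNIV. \<mu> v * valuation_column yv \<sigma> k v ! r)"
proof (cases "r = 0")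
  case True
  then show ?thesis using assms(1,4)
    by (simp add: pvec_nth valuation_column_nth is_distribution_def)
next
  case False
  then have "\<sigma> r \<in> {1..k}" using assms(3,4) by (auto simp: bij_betw_def)
  then have "ps (\<sigma> r) = (\<Sum>v\<in>{v. v (yv (\<sigma> r))}. \<mu> v)" using assms(2) by (simp add: prob_of_def)
  also have "\<dots> = (\<Sum>v\<in>UNIV. \<mu> v * valuation_column yv \<sigma> k v ! r)"
    using False assms(4) by (simp add: valuation_column_nth sum.If_cases if_distrib[of "\<lambda>a. _ * a"]
        cong: if_cong)
  finally show ?thesis using False assms(4) by (simp add: pvec_nth)
qed

text \<open>Weak duality: no \<open>\<Gamma>\<close>-consistent column prices positively under \<open>z\<close>, yet \<open>z'p = c'\<pi> > 0\<close>.\<close>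
lemma unsatisfiable_if_no_entering_column:
  assumes sr: "simplex_result k (pvec ps \<sigma> k) A c B \<pi> z" and lc: "length c = length A"
    and cpos: "0 < cost c \<pi>"
    and no_col: "\<not> (\<exists>y. is_column k y \<and> gamma_consistent G yv \<sigma> k y \<and> dotk k z y > 0)"
    and \<sigma>: "bij_betw \<sigma> {1..k} {1..k}"
  shows "\<not> psat_satisfiable G yv ps k"
proof
  assume "psat_satisfiable G yv ps k"
  then obtain \<mu> where \<mu>: "is_distribution \<mu>" and G: "\<forall>g\<in>G. prob_of \<mu> g = 1"
    and ps: "\<forall>i\<in>{1..k}. prob_of \<mu> (PVar (yv i)) = ps i"
    unfolding psat_satisfiable_def by blast
  have term_nonpos: "\<mu> v * dotk k z (valuation_column yv \<sigma> k v) \<le> 0" for v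
  proof (cases "0 < \<mu> v")
    case True
    then have "gamma_consistent G yv \<sigma> k (valuation_column yv \<sigma> k v)"
      using prob_one_imp_peval[OF \<mu>] G by (blast intro: gamma_consistent_valuation_column)
    then have "dotk k z (valuation_column yv \<sigma> k v) \<le> 0"
      using no_col is_column_valuation_column by (meson not_le)
    then show ?thesis using True by (simp add: mult_nonneg_nonpos)
  next
    case False
    moreover have "0 \<le> \<mu> v" using \<mu> by (simp add: is_distribution_def)
    ultimately show ?thesis by simp
  qed
  have "cost c \<pi> = (\<Sum>r\<le>k. z ! r * (\<Sum>v\<in>UNIV. \<mu> v * valuation_column yv \<sigma> k v ! r))"
    using cost_eq_dotk_dual[OF sr lc] pvec_eq_expected_column[OF \<mu> ps \<sigma>] by (simp add: dotk_def)
  also have "\<dots> = (\<Sum>v\<in>UNIV. \<mu> v * dotk k z (valuation_column yv \<sigma> k v))"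
    by (simp add: dotk_def sum_distrib_left sum.swap[of _ UNIV] mult_ac)
  also have "\<dots> \<le> 0" by (rule sum_nonpos) (rule term_nonpos)
  finally show False using cpos by simp
qed

text \<open>At cost zero only \<open>\<Gamma>\<close>-consistent columns carry weight; pushing the weight of each such column
  to a valuation extending it yields a satisfying distribution.\<close>
lemma satisfiable_if_zero_cost:
  fixes G :: "'a::finite pform set"
  assumes cols: "\<forall>j<length A. is_column k (A ! j)" and lc: "length c = length A"
    and c: "\<forall>j<length A. c ! j = (if gamma_consistent G yv \<sigma> k (A ! j) then 0 else 1)"
    and feas: "feasible k (pvec ps \<sigma> k) A \<pi>" and cost0: "cost c \<pi> = 0"
    and \<sigma>: "bij_betw \<sigma> {1..k} {1..k}"
  shows "psat_satisfiable G yv ps k"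
proof -
  define J where "J = {j. j < length A \<and> gamma_consistent G yv \<sigma> k (A ! j)}"
  have \<pi>0: "\<forall>j<length A. 0 \<le> \<pi> ! j"
    and \<pi>_sum: "\<forall>r\<le>k. (\<Sum>j<length A. A ! j ! r * \<pi> ! j) = pvec ps \<sigma> k ! r"
    using feas by (auto simp: feasible_def mat_vec_def)
  have "\<forall>j\<in>{..<length A}. c ! j * \<pi> ! j = 0"
    using cost0 c \<pi>0 by (subst sum_nonneg_eq_0_iff[symmetric]) (auto simp: cost_def lc)
  then have \<pi>J: "\<pi> ! j = 0" if "j < length A" "j \<notin> J" for j
  proof -
    have "c ! j * \<pi> ! j = 0" using \<open>\<forall>j\<in>{..<length A}. c ! j * \<pi> ! j = 0\<close> that(1) by blast
    moreover have "c ! j = 1" using that c by (simp add: J_def)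
    ultimately show ?thesis by simp
  qed
  have sum_J: "(\<Sum>j\<in>J. f j * \<pi> ! j) = (\<Sum>j<length A. f j * \<pi> ! j)" for f
    by (rule sum.mono_neutral_left) (auto simp: J_def \<pi>J)
  have "\<forall>j\<in>J. \<exists>v. (\<forall>g\<in>G. peval v g) \<and> (\<forall>r\<in>{1..k}. v (yv (\<sigma> r)) = (A ! j ! r = 1))"
    by (simp add: J_def gamma_consistent_def)
  from bchoice[OF this] obtain w
    where w: "\<forall>j\<in>J. (\<forall>g\<in>G. peval (w j) g) \<and> (\<forall>r\<in>{1..k}. w j (yv (\<sigma> r)) = (A ! j ! r = 1))"
    by blast
  define \<mu> where "\<mu> v = (\<Sum>j\<in>J. if w j = v then \<pi> ! j else 0)" for v
  have \<mu>_sum: "(\<Sum>v\<in>{v. P v}. \<mu> v) = (\<Sum>j\<in>J. (if P (w j) then 1 else 0) * \<pi> ! j)" for P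
    unfolding \<mu>_def
      by (subst sum.swap) (simp add: sum.delta if_distrib[of "\<lambda>a. a * _"] cong: if_cong)
  have "(\<Sum>j\<in>J. \<pi> ! j) = (\<Sum>j\<in>J. A ! j ! 0 * \<pi> ! j)"
    using cols by (intro sum.cong) (auto simp: J_def is_column_def)
  also have "\<dots> = 1" using sum_J[of "\<lambda>j. A ! j ! 0"] \<pi>_sum by (simp add: pvec_nth)
  finally have total: "(\<Sum>j\<in>J. \<pi> ! j) = 1" .
  have "is_distribution \<mu>"
  proof -
    have "0 \<le> \<mu> v" for v using \<pi>0 by (auto simp: \<mu>_def J_def intro: sum_nonneg)
    moreover have "(\<Sum>v\<in>UNIV. \<mu> v) = 1" using \<mu>_sum[of "\<lambda>_. True"] total by simp
    moreover have "\<mu> v \<le> (\<Sum>v\<in>UNIV. \<mu> v)" for v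
      by (rule member_le_sum) (simp_all add: calculation(1))
    ultimately show ?thesis by (simp add: is_distribution_def)
  qed
  moreover have "prob_of \<mu> g = 1" if "g \<in> G" for g
    using \<mu>_sum[of "\<lambda>v. peval v g"] w that total by (simp add: prob_of_def cong: sum.cong)
  moreover have "prob_of \<mu> (PVar (yv i)) = ps i" if i: "i \<in> {1..k}" for i
  proof -
    have "i \<in> \<sigma> ` {1..k}" using \<sigma> i by (simp add: bij_betw_def)
    then obtain r where r: "r \<in> {1..k}" "\<sigma> r = i" by blast
    have "prob_of \<mu> (PVar (yv i)) = (\<Sum>j\<in>J. (if w j (yv i) then 1 else 0) * \<pi> ! j)"
      using \<mu>_sum[of "\<lambda>v. v (yv i)"] by (simp add: prob_of_def)
    also have "\<dots> = (\<Sum>j\<in>J. (if A ! j ! r = 1 then 1 else 0) * \<pi> ! j)"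
      using w r by (intro sum.cong) auto
    also have "\<dots> = (\<Sum>j\<in>J. A ! j ! r * \<pi> ! j)"
    proof (rule sum.cong)
      fix j assume "j \<in> J"
      then have "A ! j ! r \<in> {0, 1}" using cols r by (simp add: J_def is_column_def)
      then show "(if A ! j ! r = 1 then 1 else 0) * \<pi> ! j = A ! j ! r * \<pi> ! j" by auto
    qed simp
    also have "\<dots> = ps i" using sum_J \<pi>_sum r by (simp add: pvec_nth)
    finally show ?thesis .
  qed
  ultimately show ?thesis unfolding psat_satisfiable_def by blast
qed

definition cg_columns ::
  "'a pform set \<Rightarrow> (nat \<Rightarrow> 'a) \<Rightarrow> (nat \<Rightarrow> nat) \<Rightarrow> nat \<Rightarrow> real list list \<Rightarrow> real list \<Rightarrow> bool"
where
  "cg_columns G yv \<sigma> k A c \<longleftrightarrow> initial_columns k A \<and> distinct A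
     \<and> (\<forall>j<length A. is_column k (A ! j)) \<and> length c = length A
     \<and> (\<forall>j<length A. c ! j = (if gamma_consistent G yv \<sigma> k (A ! j) then 0 else 1))"

definition cg_invariant ::
  "'a::finite pform set \<Rightarrow> (nat \<Rightarrow> 'a) \<Rightarrow> (nat \<Rightarrow> real) \<Rightarrow> (nat \<Rightarrow> nat) \<Rightarrow> nat \<Rightarrow> cg_state \<Rightarrow> bool" where
  "cg_invariant G yv ps \<sigma> k s \<longleftrightarrow> (case s of
      Running A c \<pi> \<Rightarrow> cg_columns G yv \<sigma> k A c \<and> feasible k (pvec ps \<sigma> k) A \<pi>
    | Returned A c \<pi> \<Rightarrow> cg_columns G yv \<sigma> k A c \<and> feasible k (pvec ps \<sigma> k) A \<pi> \<and> cost c \<pi> = 0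
    | Answer_No \<Rightarrow> \<not> psat_satisfiable G yv ps k)"

lemma cg_columns_cost_nonneg:
  assumes "cg_columns G yv \<sigma> k A c" "feasible k p A \<pi>"
  shows "0 \<le> cost c \<pi>"
  using assms unfolding cg_columns_def feasible_def cost_def
  by (auto intro!: sum_nonneg mult_nonneg_nonneg)

lemma cg_columns_length_bound:
  assumes "cg_columns G yv \<sigma> k A c"
  shows "length A \<le> card {xs :: real list. set xs \<subseteq> {0, 1} \<and> length xs = k + 1}"
proof -
  have "set A \<subseteq> {xs. set xs \<subseteq> {0, 1} \<and> length xs = k + 1}"
  proof
    fix a assume "a \<in> set A"
    then have "is_column k a" using assms by (auto simp: cg_columns_def in_set_conv_nth)
    then show "a \<in> {xs. set xs \<subseteq> {0, 1} \<and> length xs = k + 1}"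
      by (fastforce simp: is_column_def in_set_conv_nth less_Suc_eq_le)
  qed
  moreover have "finite {xs :: real list. set xs \<subseteq> {0, 1} \<and> length xs = k + 1}"
    using finite_lists_length_eq[of "{0 :: real, 1}"] by simp
  ultimately have "card (set A) \<le> card {xs :: real list. set xs \<subseteq> {0, 1} \<and> length xs = k + 1}"
    by (rule card_mono[rotated])
  then show ?thesis using assms by (simp add: cg_columns_def distinct_card)
qed

locale psat_instance =
  fixes G :: "'a::finite pform set" and yv :: "nat \<Rightarrow> 'a" and ps :: "nat \<Rightarrow> real"
    and k :: nat and \<sigma> :: "nat \<Rightarrow> nat"
  assumes ps_range: "\<forall>i\<in>{1..k}. 0 < ps i \<and> ps i < 1"
    and \<sigma>: "bij_betw \<sigma> {1..k} {1..k}"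
    and sorted: "\<forall>i j. 1 \<le> i \<and> i \<le> j \<and> j \<le> k \<longrightarrow> ps (\<sigma> j) \<le> ps (\<sigma> i)"
begin

abbreviation "p \<equiv> pvec ps \<sigma> k"
abbreviation "step \<equiv> cg_step G yv ps \<sigma> k"
abbreviation "invariant \<equiv> cg_invariant G yv ps \<sigma> k"

lemma ps_\<sigma>_range: "r \<in> {1..k} \<Longrightarrow> 0 < ps (\<sigma> r) \<and> ps (\<sigma> r) < 1"
  using \<sigma> ps_range by (auto simp: bij_betw_def)

lemma p_decreasing: "i < k \<Longrightarrow> p ! Suc i \<le> p ! i"
  using sorted ps_\<sigma>_range[of 1] by (cases "i = 0") (auto simp: pvec_nth)

lemma p_last_nonneg: "0 \<le> p ! k"
  using ps_\<sigma>_range[of k] by (auto simp: pvec_nth)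

lemma invariant_init: "invariant (cg_init G yv ps \<sigma> k)"
proof -
  interpret initial_columns k "A_init k" by unfold_locales (simp_all add: A_init_def)
  have cols: "is_column k (A_init k ! j)" if "j < length (A_init k)" for j
    using that initial_entry[of j]
    by (auto simp del: upt_Suc simp: is_column_def A_init_def less_Suc_eq_le)
  have "distinct (A_init k)"
  proof (rule distinct_conv_nth[THEN iffD2], intro allI impI)
    fix i j assume "i < length (A_init k)" "j < length (A_init k)" "i \<noteq> j"
    then have "i \<le> k" "j \<le> k" "i \<noteq> j" by (simp_all add: A_init_def)
    then have "A_init k ! i ! max i j \<noteq> A_init k ! j ! max i j" by (simp add: initial_entry max_def)
    then show "A_init k ! i \<noteq> A_init k ! j" by auto
  qed
  then have "cg_columns G yv \<sigma> k (A_init k) (c_init G yv \<sigma> k)"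
    using cols initial_columns_axioms by (simp add: cg_columns_def c_init_def)
  moreover have "feasible k p (A_init k) (pi_init k p)"
    unfolding feasible_def
  proof (intro conjI allI impI)
    show "length (pi_init k p) = length (A_init k)" by (simp add: pi_init_def A_init_def)
  next
    fix j assume "j < length (A_init k)"
    then show "0 \<le> pi_init k p ! j"
      using p_decreasing p_last_nonneg
      by (simp del: upt_Suc add: pi_init_def A_init_def nth_upt less_Suc_eq_le)
  next
    fix r assume r: "r \<le> k"
    \<comment> \<open>\<open>pi_init k p\<close> lists the coordinates of \<open>p\<close> in the initial basis\<close>
    show "mat_vec (A_init k) (pi_init k p) r = p ! r"
      using basis_coords_combination[OF initial_basis, of "\<lambda>r. p ! r"] basis_coords_initial r
      by (simp del: upt_Suc add: mat_vec_def basis_combination_def pi_init_def A_init_def nth_upt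
          lessThan_Suc_atMost[symmetric] less_Suc_eq_le mult.commute)
  qed
  ultimately show ?thesis by (simp add: cg_invariant_def cg_init_def)
qed

lemma invariant_step:
  assumes "step s t" "invariant s"
  shows "invariant t"
  using assms(1)
proof cases
  case (stop c \<pi> A)
  then show ?thesis using assms(2) cg_columns_cost_nonneg by (fastforce simp: cg_invariant_def)
next
  case (opt_zero c \<pi> A B \<pi>1 z)
  then have "feasible k p A \<pi>1" by (simp add: simplex_result_def is_bfs_def)
  then show ?thesis using opt_zero assms(2) cg_columns_cost_nonneg
    by (fastforce simp: cg_invariant_def)
next
  case (no c \<pi> A B \<pi>1 z)
  then show ?thesis
    using unsatisfiable_if_no_entering_column[OF no(4) _ no(5,6) \<sigma>] assms(2)
    by (simp add: cg_invariant_def cg_columns_def)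
next
  case (add c \<pi> A B \<pi>1 z y l \<pi>2)
  have cols: "cg_columns G yv \<sigma> k A c" using add assms(2) by (simp add: cg_invariant_def)
  \<comment> \<open>\<open>y\<close> has positive price, every consistent column of \<open>A\<close> has price at most its cost 0\<close>
  have "y \<notin> set A"
  proof
    assume "y \<in> set A"
    then obtain j where "j < length A" "A ! j = y" by (auto simp: in_set_conv_nth)
    then show False using add(4,7,8) cols by (force simp: simplex_result_def cg_columns_def)
  qed
  then have "cg_columns G yv \<sigma> k (A @ [y]) (c @ [0])"
    using cols add(6,7)
    by (auto simp: cg_columns_def initial_columns_def nth_append less_Suc_eq)
  then show ?thesis using add(2,10) by (simp add: cg_invariant_def is_bfs_def)
qed

lemma step_exists:
  assumes "invariant (Running A c \<pi>)"
  shows "\<exists>t. step (Running A c \<pi>) t"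
proof (cases "0 < cost c \<pi>")
  case False
  then show ?thesis using cg_step.stop by blast
next
  case cpos: True
  have cols: "cg_columns G yv \<sigma> k A c" using assms by (simp add: cg_invariant_def)
  then interpret initial_columns k A by (simp add: cg_columns_def)
  have c0: "\<forall>j<length A. 0 \<le> c ! j" using cols by (simp add: cg_columns_def)
  obtain B \<pi>1 z where sr: "simplex_result k p A c B \<pi>1 z"
    using optimal_basis_exists[OF c0] p_decreasing p_last_nonneg by blast
  consider "\<not> 0 < cost c \<pi>1"
    | "0 < cost c \<pi>1" "\<not> (\<exists>y. is_column k y \<and> gamma_consistent G yv \<sigma> k y \<and> dotk k z y > 0)"
    | y where "0 < cost c \<pi>1" "is_column k y" "gamma_consistent G yv \<sigma> k y" "dotk k z y > 0"
    by blast
  then show ?thesis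
  proof cases
    case 1
    then show ?thesis using cg_step.opt_zero[OF cpos sr] by blast
  next
    case 2
    then show ?thesis using cg_step.no[OF cpos sr] by blast
  next
    case 3
    then obtain l \<pi>2 where "l \<le> k" "is_bfs k p (A @ [y]) (B[l := length A]) \<pi>2"
      using simplex_result_entering_column[OF sr c0] by blast
    then show ?thesis using cg_step.add[OF cpos sr 3] by blast
  qed
qed

lemma invariant_reachable: "step\<^sup>*\<^sup>* (cg_init G yv ps \<sigma> k) s \<Longrightarrow> invariant s"
  by (induction rule: rtranclp_induct) (auto intro: invariant_init invariant_step)

lemma no_infinite_run: "\<nexists>f. f 0 = cg_init G yv ps \<sigma> k \<and> (\<forall>n. step (f n) (f (Suc n)))"
proof
  assume "\<exists>f. f 0 = cg_init G yv ps \<sigma> k \<and> (\<forall>n. step (f n) (f (Suc n)))"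
  then obtain f where f0: "f 0 = cg_init G yv ps \<sigma> k" and f: "\<forall>n. step (f n) (f (Suc n))" by blast
  have run: "\<exists>A c \<pi>. f n = Running A c \<pi> \<and> length A = k + 1 + n \<and> invariant (f n)" for n
  proof (induction n)
    case 0
    then show ?case using f0 invariant_init by (simp add: cg_init_def A_init_def)
  next
    case (Suc n)
    then obtain A c \<pi> where fn: "f n = Running A c \<pi>" "length A = k + 1 + n" "invariant (f n)"
      by blast
    obtain A' c' \<pi>' where fn': "f (Suc n) = Running A' c' \<pi>'"
      using f[rule_format, of "Suc n"] by (cases rule: cg_step.cases) auto
    have "length A' = Suc (length A)"
      using f[rule_format, of n] fn(1) fn' by (cases rule: cg_step.cases) auto
    then show ?case using fn fn' invariant_step[OF f[rule_format, of n]] by auto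
  qed
  define N where "N = card {xs :: real list. set xs \<subseteq> {0, 1} \<and> length xs = k + 1}"
  obtain A c \<pi> where fN: "f N = Running A c \<pi>" "length A = k + 1 + N" "invariant (f N)"
    using run by blast
  then have "cg_columns G yv \<sigma> k A c" by (simp add: cg_invariant_def)
  then have "length A \<le> N" unfolding N_def by (rule cg_columns_length_bound)
  then show False using fN(2) by simp
qed

lemma reachable_final_or_step:
  assumes "step\<^sup>*\<^sup>* (cg_init G yv ps \<sigma> k) s"
  shows "cg_final s \<or> (\<exists>t. step s t)"
proof (cases s)
  case (Running A c \<pi>)
  then have "invariant (Running A c \<pi>)" using invariant_reachable[OF assms] by simp
  then show ?thesis using Running step_exists by simp
qed (simp_all add: cg_final_def)

lemma reachable_final_correct:
  assumes "step\<^sup>*\<^sup>* (cg_init G yv ps \<sigma> k) s" "cg_final s"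
  shows "(psat_satisfiable G yv ps k \<longrightarrow>
            (\<exists>A c \<pi>. s = Returned A c \<pi> \<and> feasible k p A \<pi> \<and> cost c \<pi> = 0))
         \<and> (\<not> psat_satisfiable G yv ps k \<longrightarrow> s = Answer_No)"
proof -
  have inv: "invariant s" using invariant_reachable[OF assms(1)] .
  show ?thesis
  proof (cases s)
    case (Running A c \<pi>)
    then show ?thesis using assms(2) by (simp add: cg_final_def)
  next
    case (Returned A c \<pi>)
    then have cols: "cg_columns G yv \<sigma> k A c" and "feasible k p A \<pi>" "cost c \<pi> = 0"
      using inv by (simp_all add: cg_invariant_def)
    moreover have "psat_satisfiable G yv ps k"
      using satisfiable_if_zero_cost[where G = G and yv = yv, OF _ _ _ calculation(2,3) \<sigma>] cols
      by (simp add: cg_columns_def)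
    ultimately show ?thesis using Returned by simp
  next
    case Answer_No
    then show ?thesis using inv by (simp add: cg_invariant_def)
  qed
qed

end

theorem theorem1:
  fixes G :: "'a::finite pform set" and yv :: "nat \<Rightarrow> 'a" and ps :: "nat \<Rightarrow> real"
    and k :: nat and \<sigma> :: "nat \<Rightarrow> nat"
  assumes "finite G"
    and "\<forall>i\<in>{1..k}. 0 < ps i \<and> ps i < 1"
    and "bij_betw \<sigma> {1..k} {1..k}"
    and "\<forall>i j. 1 \<le> i \<and> i \<le> j \<and> j \<le> k \<longrightarrow> ps (\<sigma> j) \<le> ps (\<sigma> i)"
  shows
    \<comment> \<open>termination: no infinite run\<close>
    "(\<nexists>f. f 0 = cg_init G yv ps \<sigma> k \<and> (\<forall>n. cg_step G yv ps \<sigma> k (f n) (f (Suc n))))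
     \<comment> \<open>no run gets stuck before returning\<close>
     \<and> (\<forall>s. (cg_step G yv ps \<sigma> k)\<^sup>*\<^sup>* (cg_init G yv ps \<sigma> k) s
            \<longrightarrow> cg_final s \<or> (\<exists>t. cg_step G yv ps \<sigma> k s t))
     \<comment> \<open>correctness of every returned answer\<close>
     \<and> (\<forall>s. (cg_step G yv ps \<sigma> k)\<^sup>*\<^sup>* (cg_init G yv ps \<sigma> k) s \<and> cg_final s \<longrightarrow>
          (psat_satisfiable G yv ps k \<longrightarrow>
             (\<exists>A c \<pi>. s = Returned A c \<pi> \<and> feasible k (pvec ps \<sigma> k) A \<pi> \<and> cost c \<pi> = 0))
        \<and> (\<not> psat_satisfiable G yv ps k \<longrightarrow> s = Answer_No))"
proof -
  interpret psat_instance G yv ps k \<sigma>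
    using assms(2-4) by unfold_locales
  show ?thesis
  proof (intro conjI allI impI)
    fix s assume "step\<^sup>*\<^sup>* (cg_init G yv ps \<sigma> k) s"
    then show "cg_final s \<or> (\<exists>t. step s t)" by (rule reachable_final_or_step)
  next
    fix s assume s: "step\<^sup>*\<^sup>* (cg_init G yv ps \<sigma> k) s \<and> cg_final s" and "psat_satisfiable G yv ps k"
    then show "\<exists>A c \<pi>. s = Returned A c \<pi> \<and> feasible k p A \<pi> \<and> cost c \<pi> = 0"
      using reachable_final_correct[OF s[THEN conjunct1] s[THEN conjunct2]] by blast
  next
    fix s assume s: "step\<^sup>*\<^sup>* (cg_init G yv ps \<sigma> k) s \<and> cg_final s"
      and "\<not> psat_satisfiable G yv ps k"
    then show "s = Answer_No"
      using reachable_final_correct[OF s[THEN conjunct1] s[THEN conjunct2]] by blast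
  qed (rule no_infinite_run)
qed
end
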